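(* The class of weak betweenness algebras is not closed under (direct) products.
   Context: A PS-algebra is $\langle A,f,g\rangle$ where $A$ is a Boolean algebra with at least two elements (operations $+,\cdot,-,0,1$) and $f,g\colon A^2\to A$ satisfy: $f(x,y)=0$ whenever $x=0$ or $y=0$; $f$ is additive in each argument; $g(x,y)=1$ whenever $x=0$ or $y=0$; $g$ is co-additive in each argument ($g(x+x',y)=g(x,y)\cdot g(x',y)$, $g(x,y+y')=g(x,y)\cdot g(x,y')$). A weak betweenness algebra is a PS-algebra satisfying for all $x,y,z,a$: (ABT0) $x\leq f(x,x)$; (ABT1$_f$) $f(x,y)\leq f(y,x)$; (ABT1$_g$) $g(x,y)\leq g(y,x)$; (ABT2) $y\cdot f(x,z)\leq f(x\cdot f(x,y),z)$; (ABTW) $a\neq0\Rightarrow g(a,a)\leq a$. Products are taken componentwise. *)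

theory Defs
  imports Main "HOL-Library.Product_Order"
begin

text \<open>Boolean algebra operations: sup (+), inf (\<cdot>), uminus (-), bot (0), top (1).
  Algebras are represented on a type of class boolean_algebra; the products of
  Boolean algebras are given by the componentwise instance from Product_Order.\<close>

definition ps_algebra :: "('a::boolean_algebra \<Rightarrow> 'a \<Rightarrow> 'a) \<Rightarrow> ('a \<Rightarrow> 'a \<Rightarrow> 'a) \<Rightarrow> bool" where
  "ps_algebra f g \<longleftrightarrow>
     (bot::'a) \<noteq> top \<and>
     (\<forall>x y. (x = bot \<or> y = bot) \<longrightarrow> f x y = bot) \<and>
     (\<forall>x x' y. f (sup x x') y = sup (f x y) (f x' y)) \<and>
     (\<forall>x y y'. f x (sup y y') = sup (f x y) (f x y')) \<and>
     (\<forall>x y. (x = bot \<or> y = bot) \<longrightarrow> g x y = top) \<and>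
     (\<forall>x x' y. g (sup x x') y = inf (g x y) (g x' y)) \<and>
     (\<forall>x y y'. g x (sup y y') = inf (g x y) (g x y'))"

definition weak_betweenness_algebra ::
  "('a::boolean_algebra \<Rightarrow> 'a \<Rightarrow> 'a) \<Rightarrow> ('a \<Rightarrow> 'a \<Rightarrow> 'a) \<Rightarrow> bool" where
  "weak_betweenness_algebra f g \<longleftrightarrow>
     ps_algebra f g \<and>
     (\<forall>x. x \<le> f x x) \<and>
     (\<forall>x y. f x y \<le> f y x) \<and>
     (\<forall>x y. g x y \<le> g y x) \<and>
     (\<forall>x y z. inf y (f x z) \<le> f (inf x (f x y)) z) \<and>
     (\<forall>a. a \<noteq> bot \<longrightarrow> g a a \<le> a)"

definition prod_op :: "('a \<Rightarrow> 'a \<Rightarrow> 'a) \<Rightarrow> ('b \<Rightarrow> 'b \<Rightarrow> 'b) \<Rightarrow>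
    ('a \<times> 'b) \<Rightarrow> ('a \<times> 'b) \<Rightarrow> ('a \<times> 'b)" where
  "prod_op f1 f2 p q = (f1 (fst p) (fst q), f2 (snd p) (snd q))"

end

theory Submission
  imports Defs
begin

text \<open>Take meet for \<open>f\<close> and the constant \<open>1\<close> for \<open>g\<close>. All axioms except (ABTW) hold in
  every Boolean algebra, and (ABTW) then says that every nonzero element is \<open>1\<close>, i.e. that the
  algebra has exactly two elements. So this is a weak betweenness algebra on the two-element
  algebra but not on its square, which is again of the same form since the operations are
  computed componentwise.\<close>

lemma ps_algebra_inf_top:
  assumes "(bot::'a::boolean_algebra) \<noteq> top"
  shows "ps_algebra inf (\<lambda>_ _. top::'a)"
  using assms unfolding ps_algebra_def by (simp add: inf_sup_distrib1 inf_sup_distrib2)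

lemma weak_betweenness_algebra_inf_top_iff:
  "weak_betweenness_algebra inf (\<lambda>_ _. top::'a::boolean_algebra) \<longleftrightarrow>
     (bot::'a) \<noteq> top \<and> (\<forall>a::'a. a \<noteq> bot \<longrightarrow> a = top)"
proof -
  have "inf y (inf x z) \<le> inf (inf x (inf x y)) z" for x y z :: 'a
    by (simp add: inf_aci)
  then show ?thesis
    unfolding weak_betweenness_algebra_def
    using ps_algebra_inf_top by (auto simp: ps_algebra_def inf_commute top_unique)
qed

lemma prod_op_inf: "prod_op inf inf = inf"
  by (simp add: fun_eq_iff prod_op_def inf_prod_def)

lemma prod_op_const_top: "prod_op (\<lambda>_ _. top) (\<lambda>_ _. top) = (\<lambda>_ _. top)"
  by (simp add: fun_eq_iff prod_op_def top_prod_def)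

lemma weak_betweenness_algebra_bool_inf_top:
  "weak_betweenness_algebra inf (\<lambda>_ _. top::bool)"
  unfolding weak_betweenness_algebra_inf_top_iff by simp

lemma not_weak_betweenness_algebra_bool_square_inf_top:
  "\<not> weak_betweenness_algebra inf (\<lambda>_ _. top::bool \<times> bool)"
proof -
  have "(True, False) \<noteq> bot" "(True, False) \<noteq> top"
    by (simp_all add: bot_prod_def top_prod_def)
  then show ?thesis
    unfolding weak_betweenness_algebra_inf_top_iff by blast
qed

theorem proposition38:
  shows "\<exists>(f1::bool \<Rightarrow> bool \<Rightarrow> bool) g1 (f2::bool \<Rightarrow> bool \<Rightarrow> bool) g2.
           weak_betweenness_algebra f1 g1 \<and> weak_betweenness_algebra f2 g2 \<and>
           \<not> weak_betweenness_algebra (prod_op f1 f2) (prod_op g1 g2)"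
proof (intro exI conjI)
  show "\<not> weak_betweenness_algebra (prod_op inf inf)
          (prod_op (\<lambda>_ _. top::bool) (\<lambda>_ _. top::bool))"
    unfolding prod_op_inf prod_op_const_top
    by (rule not_weak_betweenness_algebra_bool_square_inf_top)
qed (rule weak_betweenness_algebra_bool_inf_top)+

end
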